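(* The quadric $\mathcal E$ is an elliptic quadric of $\mathrm{PG}(W)\cong\mathrm{PG}(3,q)$.
   Context: $q$ is a prime power. Regard $\mathbb F_{q^6}$ as a $6$-dimensional $\mathbb F_q$-vector space. Let $F(X)=X^{q^2}-X^q+X$, an $\mathbb F_q$-linear map of $\mathbb F_{q^6}$, and $W=F(\mathbb F_{q^6})=\{z\in\mathbb F_{q^6} : z+z^q=z^{q^3}+z^{q^4}\}$, a $4$-dimensional $\mathbb F_q$-subspace, so $\mathrm{PG}(W)\cong\mathrm{PG}(3,q)$ with points $\langle z\rangle=\mathbb F_q^*z$. Let $\Phi(z)=z^{q^2}z+z^{q^2}z^{q}+z^{q}z^{q^3}$; for $z\in W$ one has $\Phi(z)\in\mathbb F_q$ and $\Phi$ is a quadratic form on $W$; $\mathcal E=\{\langle z\rangle\in\mathrm{PG}(W):\Phi(z)=0\}$. *)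

theory Defs
  imports "HOL-Computational_Algebra.Primes"
begin

definition subfield_q :: "nat \<Rightarrow> ('a::field) set" where
  "subfield_q q = {x. x ^ q = x}"

definition is_subspace :: "'a::field set \<Rightarrow> 'a set \<Rightarrow> bool" where
  "is_subspace K V \<longleftrightarrow> 0 \<in> V \<and> (\<forall>u\<in>V. \<forall>v\<in>V. u + v \<in> V) \<and> (\<forall>c\<in>K. \<forall>v\<in>V. c * v \<in> V)"

definition lin_indep4 :: "'a::field set \<Rightarrow> 'a \<Rightarrow> 'a \<Rightarrow> 'a \<Rightarrow> 'a \<Rightarrow> bool" where
  "lin_indep4 K b0 b1 b2 b3 \<longleftrightarrow>
     (\<forall>c0\<in>K. \<forall>c1\<in>K. \<forall>c2\<in>K. \<forall>c3\<in>K.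
        c0*b0 + c1*b1 + c2*b2 + c3*b3 = 0 \<longrightarrow> c0 = 0 \<and> c1 = 0 \<and> c2 = 0 \<and> c3 = 0)"

definition dim4_subspace :: "'a::field set \<Rightarrow> 'a set \<Rightarrow> bool" where
  "dim4_subspace K V \<longleftrightarrow> is_subspace K V \<and>
     (\<exists>b0\<in>V. \<exists>b1\<in>V. \<exists>b2\<in>V. \<exists>b3\<in>V. lin_indep4 K b0 b1 b2 b3 \<and>
        V = {c0*b0 + c1*b1 + c2*b2 + c3*b3 | c0 c1 c2 c3. c0\<in>K \<and> c1\<in>K \<and> c2\<in>K \<and> c3\<in>K})"

definition polar :: "('a::field \<Rightarrow> 'a) \<Rightarrow> 'a \<Rightarrow> 'a \<Rightarrow> 'a" where
  "polar Q u v = Q (u + v) - Q u - Q v"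

definition quadratic_form_on :: "'a::field set \<Rightarrow> 'a set \<Rightarrow> ('a \<Rightarrow> 'a) \<Rightarrow> bool" where
  "quadratic_form_on K V Q \<longleftrightarrow>
     (\<forall>v\<in>V. Q v \<in> K) \<and>
     (\<forall>c\<in>K. \<forall>v\<in>V. Q (c * v) = c^2 * Q v) \<and>
     (\<forall>u\<in>V. \<forall>u'\<in>V. \<forall>v\<in>V. polar Q (u + u') v = polar Q u v + polar Q u' v) \<and>
     (\<forall>c\<in>K. \<forall>u\<in>V. \<forall>v\<in>V. polar Q (c * u) v = c * polar Q u v)"

definition nonsingular_qf :: "'a::field set \<Rightarrow> ('a \<Rightarrow> 'a) \<Rightarrow> bool" where
  "nonsingular_qf V Q \<longleftrightarrow>
     (\<forall>v\<in>V. v \<noteq> 0 \<and> Q v = 0 \<and> (\<forall>w\<in>V. polar Q v w = 0) \<longrightarrow> False)"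

definition contains_no_line :: "'a::field set \<Rightarrow> 'a set \<Rightarrow> ('a \<Rightarrow> 'a) \<Rightarrow> bool" where
  "contains_no_line K V Q \<longleftrightarrow>
     (\<forall>u\<in>V. \<forall>v\<in>V. (\<forall>a\<in>K. \<forall>b\<in>K. a*u + b*v = 0 \<longrightarrow> a = 0 \<and> b = 0) \<longrightarrow>
        \<not> (\<forall>a\<in>K. \<forall>b\<in>K. Q (a*u + b*v) = 0))"

definition elliptic_quadric :: "'a::field set \<Rightarrow> 'a set \<Rightarrow> ('a \<Rightarrow> 'a) \<Rightarrow> bool" where
  "elliptic_quadric K V Q \<longleftrightarrow> dim4_subspace K V \<and> quadratic_form_on K V Q \<and>
     nonsingular_qf V Q \<and> contains_no_line K V Q"

end

theory Submission
  imports Defs "HOL-Number_Theory.Residues" "HOL-Computational_Algebra.Polynomial"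
begin

text \<open>
  Write \<open>frob i\<close> for \<open>x \<mapsto> x ^ q ^ i\<close>; on a field of order \<open>q ^ 6\<close> these maps are additive and
  compose modulo 6. The image \<open>W\<close> of \<open>F = frob 2 - frob 1 + id\<close> satisfies
  \<open>frob 4 z = z + frob 1 z - frob 3 z\<close>, which makes \<open>Phi z\<close> fixed by \<open>frob 1\<close>, i.e. \<open>F\<^sub>q\<close>-valued.
  Bounding roots of polynomials and kernels of additive maps gives \<open>|F\<^sub>q| = q\<close> and
  \<open>|W| = q ^ 4\<close>, so \<open>W\<close> is 4-dimensional over \<open>F\<^sub>q\<close>.

  The polar form of \<open>Phi\<close> pairs \<open>v \<in> W\<close> with \<open>F x\<close> to the trace of \<open>frob 2 v * x\<close>, and the
  trace is not identically zero, so \<open>Phi\<close> is non-singular. Finally, the product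
  \<open>(frob 2 u * frob 1 v - frob 1 u * frob 2 v) * m\<close> with \<open>m = u * frob 1 v - frob 1 u * v\<close> is a
  combination of \<open>Phi u\<close>, \<open>Phi v\<close> and their polar value. On a totally singular line it
  vanishes; its first factor is \<open>- frob 1 m\<close>, so \<open>m = 0\<close>, which says that \<open>v / u\<close> lies in \<open>F\<^sub>q\<close>.
\<close>

section \<open>Finite fields\<close>

text \<open>The library's \<open>finite_field_power_card_eq_same\<close> is stated for the class \<open>finite_field\<close>,
  which a type of sort \<open>{finite, field}\<close> is not known to belong to.\<close>
lemma power_card_eq_self:
  fixes x :: "'a::{finite,field}"
  shows "x ^ card (UNIV :: 'a set) = x"
proof (cases "x = 0")
  case False
  let ?G = "\<lparr>carrier = UNIV - {0 :: 'a}, mult = (*), one = 1\<rparr>"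
  have "comm_group ?G"
  proof (rule comm_groupI)
    show "\<exists>y\<in>carrier ?G. y \<otimes>\<^bsub>?G\<^esub> x = \<one>\<^bsub>?G\<^esub>" if "x \<in> carrier ?G" for x
      using that by (intro bexI[of _ "inverse x"]) auto
  qed auto
  then have "x [^]\<^bsub>?G\<^esub> card (carrier ?G) = 1"
    using False comm_group.power_order_eq_one[of ?G x] by simp
  moreover have "y [^]\<^bsub>?G\<^esub> n = y ^ n" for y :: 'a and n :: nat
    by (induction n) (simp_all add: nat_pow_def)
  ultimately have "x ^ (card (UNIV :: 'a set) - 1) = 1"
    by (simp add: card_Diff_singleton)
  then show ?thesis
    by (metis finite_UNIV_card_ge_0 finite power_eq_if mult.right_neutral not_gr0)
qed (simp add: finite_UNIV_card_ge_0)

lemma power_card_power_eq_self: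
  fixes x :: "'a::{finite,field}"
  shows "x ^ (card (UNIV :: 'a set) ^ m) = x"
  by (induction m) (simp_all add: power_mult power_card_eq_self)

lemma CHAR_eq_of_card_prime_power:
  fixes p n :: nat
  assumes "prime p" and "card (UNIV :: 'a::{finite,field} set) = p ^ n"
  shows "CHAR('a) = p"
proof -
  have char_prime: "prime CHAR('a)"
    using prime_CHAR_semidom finite_imp_CHAR_pos[where ?'a = 'a] by auto
  then have "CHAR('a) dvd p"
    using CHAR_dvd_CARD[where ?'a = 'a] assms(2) prime_dvd_power by metis
  then show ?thesis
    using char_prime assms(1) by (simp add: primes_dvd_imp_eq)
qed

lemma card_roots_of_monic_le:
  fixes r :: "'a::idom poly"
  assumes "degree r < N" and "\<And>x. x \<in> A \<Longrightarrow> x ^ N + poly r x = 0"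
  shows "card A \<le> N"
proof -
  define p where "p = monom 1 N + r"
  have deg: "degree p = N"
    unfolding p_def using assms(1) by (subst degree_add_eq_left) (auto simp: degree_monom_eq)
  then have "p \<noteq> 0"
    using assms(1) by auto
  have "A \<subseteq> {x. poly p x = 0}"
    using assms(2) by (auto simp: p_def poly_monom)
  then have "card A \<le> card {x. poly p x = 0}"
    using poly_roots_finite[OF \<open>p \<noteq> 0\<close>] by (rule card_mono[rotated])
  also have "\<dots> \<le> N"
    using card_poly_roots_bound[OF \<open>p \<noteq> 0\<close>] deg by simp
  finally show ?thesis .
qed

lemma card_UNIV_le_card_range_mult_card_kernel:
  fixes f :: "'a::{finite,ab_group_add} \<Rightarrow> 'b::ab_group_add"
  assumes additive: "\<And>x y. f (x + y) = f x + f y"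
  shows "card (UNIV :: 'a set) \<le> card (range f) * card {x. f x = 0}"
proof -
  have fibre: "card (f -` {y}) \<le> card {x. f x = 0}" if "y \<in> range f" for y
  proof -
    obtain x0 where "f x0 = y"
      using \<open>y \<in> range f\<close> by auto
    have "f (x - x0) = f x - f x0" for x
      using additive[of "x - x0" x0] by (simp add: algebra_simps)
    then have "f -` {y} \<subseteq> (\<lambda>k. x0 + k) ` {x. f x = 0}"
      using \<open>f x0 = y\<close> by (auto intro!: image_eqI[where x = "_ - x0"])
    then have "card (f -` {y}) \<le> card ((\<lambda>k. x0 + k) ` {x. f x = 0})"
      by (intro card_mono) auto
    also have "\<dots> \<le> card {x. f x = 0}"
      by (rule card_image_le) simp
    finally show ?thesis .
  qed
  have "card (UNIV :: 'a set) = card (\<Union>y\<in>range f. f -` {y})"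
    by (rule arg_cong[where f = card]) auto
  also have "\<dots> \<le> (\<Sum>y\<in>range f. card (f -` {y}))"
    by (rule card_UN_le) simp
  also have "\<dots> \<le> (\<Sum>y\<in>range f. card {x. f x = 0})"
    by (rule sum_mono) (rule fibre)
  finally show ?thesis
    by simp
qed

section \<open>Linear algebra over a subfield given as a set\<close>

fun lincomb :: "'a::field list \<Rightarrow> 'a list \<Rightarrow> 'a" where
  "lincomb (c # cs) (b # bs) = c * b + lincomb cs bs"
| "lincomb _ _ = 0"

lemma lincomb_Nil2 [simp]: "lincomb cs [] = 0"
  by (cases cs) simp_all

lemma lincomb_scale: "k * lincomb cs bs = lincomb (map ((*) k) cs) bs"
  by (induction cs bs rule: lincomb.induct) (simp_all add: algebra_simps)

lemma lincomb_diff: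
  "length cs = length ds \<Longrightarrow> lincomb cs bs - lincomb ds bs = lincomb (map2 (-) cs ds) bs"
proof (induction cs bs arbitrary: ds rule: lincomb.induct)
  case (1 c cs b bs)
  then obtain d ds' where "ds = d # ds'" "length cs = length ds'"
    by (cases ds) auto
  with "1.IH"[of ds'] show ?case
    by (simp add: algebra_simps)
qed simp_all

locale subfield_set =
  fixes K :: "'a::field set"
  assumes zero_mem [simp]: "0 \<in> K" and one_mem [simp]: "1 \<in> K"
    and diff_mem: "a \<in> K \<Longrightarrow> b \<in> K \<Longrightarrow> a - b \<in> K"
    and mult_mem: "a \<in> K \<Longrightarrow> b \<in> K \<Longrightarrow> a * b \<in> K"
    and inverse_mem: "a \<in> K \<Longrightarrow> inverse a \<in> K"
begin

definition coeff_lists :: "nat \<Rightarrow> 'a list set" where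
  "coeff_lists n = {cs. set cs \<subseteq> K \<and> length cs = n}"

definition lin_span :: "'a list \<Rightarrow> 'a set" where
  "lin_span bs = (\<lambda>cs. lincomb cs bs) ` coeff_lists (length bs)"

definition lin_indep :: "'a list \<Rightarrow> bool" where
  "lin_indep bs \<longleftrightarrow> inj_on (\<lambda>cs. lincomb cs bs) (coeff_lists (length bs))"

lemma lincomb_mem_subspace:
  assumes "is_subspace K V" "set cs \<subseteq> K" "set bs \<subseteq> V"
  shows "lincomb cs bs \<in> V"
  using assms by (induction cs bs rule: lincomb.induct) (simp_all add: is_subspace_def)

lemma lin_span_subset:
  "is_subspace K V \<Longrightarrow> set bs \<subseteq> V \<Longrightarrow> lin_span bs \<subseteq> V"
  unfolding lin_span_def coeff_lists_def using lincomb_mem_subspace by auto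

lemma card_lin_span:
  "finite K \<Longrightarrow> lin_indep bs \<Longrightarrow> card (lin_span bs) = card K ^ length bs"
  unfolding lin_span_def lin_indep_def coeff_lists_def
  by (simp add: card_image card_lists_length_eq)

lemma lin_indep_Nil: "lin_indep []"
  unfolding lin_indep_def coeff_lists_def by (auto intro: inj_onI)

lemma lin_indep_Cons:
  assumes indep: "lin_indep bs" and notin: "b \<notin> lin_span bs"
  shows "lin_indep (b # bs)"
  unfolding lin_indep_def
proof (rule inj_onI)
  fix xs ys
  assume "xs \<in> coeff_lists (length (b # bs))" "ys \<in> coeff_lists (length (b # bs))"
    and eq: "lincomb xs (b # bs) = lincomb ys (b # bs)"
  then obtain c cs d ds where xs: "xs = c # cs" and ys: "ys = d # ds" and "c \<in> K" "d \<in> K"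
    and cs: "cs \<in> coeff_lists (length bs)" and ds: "ds \<in> coeff_lists (length bs)"
    by (auto simp: coeff_lists_def length_Suc_conv)
  have "c = d"
  proof (rule ccontr)
    assume "c \<noteq> d"
    have "(c - d) * b = lincomb (map2 (-) ds cs) bs"
      using eq cs ds by (simp add: xs ys lincomb_diff[symmetric] coeff_lists_def algebra_simps)
    then have "b = inverse (c - d) * lincomb (map2 (-) ds cs) bs"
      using \<open>c \<noteq> d\<close> by (metis mult.assoc left_inverse mult_1 right_minus_eq)
    also have "\<dots> = lincomb (map ((*) (inverse (c - d))) (map2 (-) ds cs)) bs"
      by (rule lincomb_scale)
    moreover have "map ((*) (inverse (c - d))) (map2 (-) ds cs) \<in> coeff_lists (length bs)"
      using cs ds \<open>c \<in> K\<close> \<open>d \<in> K\<close> unfolding coeff_lists_def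
      by (auto intro!: mult_mem inverse_mem diff_mem dest: set_zip_leftD set_zip_rightD)
    ultimately have "b \<in> lin_span bs"
      unfolding lin_span_def by blast
    with notin show False ..
  qed
  then have "lincomb cs bs = lincomb ds bs"
    using eq by (simp add: xs ys)
  then have "cs = ds"
    using indep cs ds unfolding lin_indep_def by (auto dest: inj_onD)
  with \<open>c = d\<close> show "xs = ys"
    by (simp add: xs ys)
qed

lemma card_gt_1: "finite K \<Longrightarrow> card K > 1"
  using card_mono[of K "{0, 1}"] by simp

lemma exists_lin_indep:
  assumes "finite K" "is_subspace K V" "finite V" "card V = card K ^ n" "m \<le> n"
  shows "\<exists>bs. length bs = m \<and> set bs \<subseteq> V \<and> lin_indep bs"
  using \<open>m \<le> n\<close>
proof (induction m)
  case 0
  show ?case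
    using lin_indep_Nil by auto
next
  case (Suc m)
  then obtain bs where bs: "length bs = m" "set bs \<subseteq> V" "lin_indep bs"
    by auto
  have "card (lin_span bs) < card V"
    using card_lin_span[OF \<open>finite K\<close> bs(3)] bs(1) Suc.prems card_gt_1 assms
    by (simp add: power_strict_increasing)
  then obtain b where "b \<in> V" "b \<notin> lin_span bs"
    using lin_span_subset[OF assms(2) bs(2)] by (metis subsetI subset_antisym less_irrefl)
  then show ?case
    using bs lin_indep_Cons by (intro exI[of _ "b # bs"]) auto
qed

lemma lin_span_eq_if_card:
  assumes "finite K" "is_subspace K V" "finite V" "card V = card K ^ length bs"
    and "set bs \<subseteq> V" "lin_indep bs"
  shows "lin_span bs = V"
  using assms by (intro card_subset_eq lin_span_subset) (simp_all add: card_lin_span)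

lemma lin_span_four:
  "lin_span [b0, b1, b2, b3] =
     {c0*b0 + c1*b1 + c2*b2 + c3*b3 | c0 c1 c2 c3. c0\<in>K \<and> c1\<in>K \<and> c2\<in>K \<and> c3\<in>K}"
proof (rule Set.set_eqI, rule iffI)
  fix x
  assume "x \<in> lin_span [b0, b1, b2, b3]"
  then obtain cs where "set cs \<subseteq> K" "length cs = 4" "x = lincomb cs [b0, b1, b2, b3]"
    by (auto simp: lin_span_def coeff_lists_def)
  then show "x \<in> {c0*b0 + c1*b1 + c2*b2 + c3*b3 | c0 c1 c2 c3. c0\<in>K \<and> c1\<in>K \<and> c2\<in>K \<and> c3\<in>K}"
    by (auto simp: numeral_eq_Suc length_Suc_conv add.assoc) blast
next
  fix x
  assume "x \<in> {c0*b0 + c1*b1 + c2*b2 + c3*b3 | c0 c1 c2 c3. c0\<in>K \<and> c1\<in>K \<and> c2\<in>K \<and> c3\<in>K}"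
  then obtain c0 c1 c2 c3 where "c0\<in>K" "c1\<in>K" "c2\<in>K" "c3\<in>K" "x = c0*b0 + c1*b1 + c2*b2 + c3*b3"
    by auto
  then show "x \<in> lin_span [b0, b1, b2, b3]"
    unfolding lin_span_def coeff_lists_def
    by (intro image_eqI[of _ _ "[c0, c1, c2, c3]"]) (simp_all add: add.assoc)
qed

lemma lin_indep4_if_lin_indep:
  assumes "lin_indep [b0, b1, b2, b3]"
  shows "lin_indep4 K b0 b1 b2 b3"
  unfolding lin_indep4_def
proof (intro ballI impI)
  fix c0 c1 c2 c3
  assume "c0 \<in> K" "c1 \<in> K" "c2 \<in> K" "c3 \<in> K" "c0*b0 + c1*b1 + c2*b2 + c3*b3 = 0"
  then have "[c0, c1, c2, c3] = [0, 0, 0, 0]"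
    by (intro inj_onD[OF assms[unfolded lin_indep_def]]) (simp_all add: coeff_lists_def add.assoc)
  then show "c0 = 0 \<and> c1 = 0 \<and> c2 = 0 \<and> c3 = 0"
    by simp
qed

lemma dim4_subspace_if_card:
  assumes "finite K" "is_subspace K V" "finite V" "card V = card K ^ 4"
  shows "dim4_subspace K V"
proof -
  obtain bs where bs: "length bs = 4" "set bs \<subseteq> V" "lin_indep bs"
    using exists_lin_indep[OF assms, of 4] by auto
  then obtain b0 b1 b2 b3 where bs_eq: "bs = [b0, b1, b2, b3]"
    by (auto simp: numeral_eq_Suc length_Suc_conv)
  have "V = lin_span bs"
    using lin_span_eq_if_card[OF assms(1-3) _ bs(2,3)] assms(4) bs(1) by simp
  moreover have "lin_indep4 K b0 b1 b2 b3"
    using bs(3) by (simp add: bs_eq lin_indep4_if_lin_indep)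
  moreover have "b0 \<in> V" "b1 \<in> V" "b2 \<in> V" "b3 \<in> V"
    using bs(2) by (simp_all add: bs_eq)
  ultimately show ?thesis
    unfolding dim4_subspace_def bs_eq lin_span_four using assms(2) by blast
qed

end

section \<open>Frobenius powers on a field of order \<open>q\<^sup>6\<close>\<close>

locale sextic_extension =
  fixes q :: nat and field_type :: "'a::{finite,field} itself"
  assumes prime_power: "\<exists>p k. prime p \<and> k > 0 \<and> q = p ^ k"
    and card_field: "card (UNIV :: 'a set) = q ^ 6"
begin

text \<open>Keeping \<open>1\<close> a numeral lets the simp rule \<open>frob_frob\<close> below evaluate indices such as
  \<open>(1 + 1) mod 6\<close> to \<open>2\<close> instead of \<open>Suc (Suc 0)\<close>.\<close>
declare One_nat_def [simp del]

lemma q_gt_1: "q > 1"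
  using prime_power by (metis one_less_power prime_gt_1_nat)

lemma q_power_strict_mono: "i < j \<Longrightarrow> q ^ i < q ^ j"
  using q_gt_1 by (simp add: power_strict_increasing)

lemma power_q_add: "(x + y :: 'a) ^ q = x ^ q + y ^ q"
proof -
  obtain p k where "prime p" "q = p ^ k"
    using prime_power by blast
  moreover have "CHAR('a) = p"
    using CHAR_eq_of_card_prime_power[of p "k * 6"] card_field \<open>prime p\<close> \<open>q = p ^ k\<close>
    by (simp add: power_mult)
  ultimately show ?thesis
    by (intro freshmans_dream'[where n = k]) simp_all
qed

definition frob :: "nat \<Rightarrow> 'a \<Rightarrow> 'a" where
  "frob i x = x ^ q ^ i"

lemma frob_add: "frob i (x + y) = frob i x + frob i y"
proof (induction i)
  case (Suc i)
  have "frob (Suc i) z = frob i z ^ q" for z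
    by (simp only: frob_def power_Suc2 power_mult)
  with Suc show ?case
    by (simp add: power_q_add)
qed (simp add: frob_def)

lemma frob_mult: "frob i (x * y) = frob i x * frob i y"
  by (simp add: frob_def power_mult_distrib)

lemma frob_divide: "frob i (x / y) = frob i x / frob i y"
  by (simp add: frob_def power_divide)

lemma frob_eq_0_iff [simp]: "frob i x = 0 \<longleftrightarrow> x = 0"
  using q_gt_1 by (simp add: frob_def)

lemma frob_0_right [simp]: "frob i 0 = 0"
  by simp

lemma frob_neg: "frob i (- x) = - frob i x"
  using frob_add[of i x "- x"] by (simp add: eq_neg_iff_add_eq_0 add.commute)

lemma frob_diff: "frob i (x - y) = frob i x - frob i y"
  using frob_add[of i x "- y"] by (simp add: frob_neg)

lemmas frob_hom = frob_add frob_mult frob_neg frob_diff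

lemma frob_0 [simp]: "frob 0 x = x"
  by (simp add: frob_def)

text \<open>Since \<open>frob 6\<close> is the identity, compositions of Frobenius powers are computed modulo 6;
  as a simp rule this normalises every nested \<open>frob\<close> term to a single \<open>frob i\<close> with \<open>i < 6\<close>.\<close>
lemma frob_frob [simp]: "frob i (frob j x) = frob ((j + i) mod 6) x"
proof -
  have "q ^ (j + i) = (q ^ 6) ^ ((j + i) div 6) * q ^ ((j + i) mod 6)"
    by (simp only: power_mult[symmetric] power_add[symmetric] mult_div_mod_eq)
  then have "frob i (frob j x) = (x ^ (card (UNIV :: 'a set) ^ ((j + i) div 6))) ^ q ^ ((j + i) mod 6)"
    by (simp add: frob_def card_field power_add power_mult[symmetric])
  then show ?thesis
    by (simp add: frob_def power_card_power_eq_self)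
qed

abbreviation K :: "'a set" where
  "K \<equiv> subfield_q q"

lemma mem_K_iff: "c \<in> K \<longleftrightarrow> frob 1 c = c"
  by (simp add: subfield_q_def frob_def)

lemma frob_K: "c \<in> K \<Longrightarrow> frob i c = c"
  by (induction i) (simp_all add: frob_def power_mult subfield_q_def)

sublocale subfield_set K
proof
  show "0 \<in> K" "1 \<in> K"
    using q_gt_1 by (simp_all add: subfield_q_def)
  show "a - b \<in> K" "a * b \<in> K" if "a \<in> K" "b \<in> K" for a b
    using that by (simp_all add: mem_K_iff frob_hom)
  show "inverse a \<in> K" if "a \<in> K" for a
    using that by (simp add: subfield_q_def power_inverse)
qed

definition trace :: "'a \<Rightarrow> 'a" where
  "trace y = y + frob 1 y + frob 2 y + frob 3 y + frob 4 y + frob 5 y"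

lemma card_trace_kernel: "card {y. trace y = 0} \<le> q ^ 5"
proof (rule card_roots_of_monic_le)
  let ?r = "monom 1 (q ^ 4) + monom 1 (q ^ 3) + monom 1 (q ^ 2) + monom 1 q + monom (1 :: 'a) 1"
  have "degree ?r \<le> q ^ 4"
    using q_power_strict_mono[of 3 4] q_power_strict_mono[of 2 4] q_power_strict_mono[of 1 4]
      q_power_strict_mono[of 0 4]
    by (intro degree_add_le order_trans[OF degree_monom_le]) simp_all
  then show "degree ?r < q ^ 5"
    using q_power_strict_mono[of 4 5] by linarith
  show "y ^ q ^ 5 + poly ?r y = 0" if "y \<in> {y. trace y = 0}" for y
    using that by (simp add: trace_def frob_def poly_monom algebra_simps)
qed

lemma trace_nonzero: "\<exists>y. trace y \<noteq> 0"
proof (rule ccontr)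
  assume "\<nexists>y. trace y \<noteq> 0"
  then have "q ^ 6 \<le> q ^ 5"
    using card_trace_kernel card_field by simp
  then show False
    using q_power_strict_mono[of 5 6] by simp
qed

lemma card_K_le: "card K \<le> q"
proof (rule card_roots_of_monic_le)
  show "degree (- monom (1 :: 'a) 1) < q"
    using q_gt_1 by (simp add: degree_monom_eq)
  show "c ^ q + poly (- monom 1 1) c = 0" if "c \<in> K" for c
    using that by (simp add: subfield_q_def poly_monom)
qed

text \<open>The kernel of the additive map \<open>x \<mapsto> x\<^sup>q - x\<close> is \<open>K\<close> and its image lies in the kernel
  of the trace, so \<open>q\<^sup>6 \<le> q\<^sup>5 \<cdot> |K|\<close>.\<close>
lemma card_K_ge: "q \<le> card K"
proof -
  define f where "f x = frob 1 x - x" for x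
  have "range f \<subseteq> {y. trace y = 0}"
    by (auto simp: f_def trace_def frob_hom)
  then have range_bound: "card (range f) \<le> q ^ 5"
    using card_trace_kernel card_mono[of "{y. trace y = 0}" "range f"] by simp
  have "{x. f x = 0} = K"
    by (auto simp: f_def mem_K_iff)
  then have "q ^ 6 \<le> card (range f) * card K"
    using card_UNIV_le_card_range_mult_card_kernel[of f] card_field by (simp add: f_def frob_hom)
  also have "\<dots> \<le> q ^ 5 * card K"
    using range_bound by (rule mult_le_mono1)
  finally have "q ^ 5 * q \<le> q ^ 5 * card K"
    using power_Suc2[of q 5] by simp
  then show ?thesis
    using q_gt_1 by simp
qed

lemma card_K: "card K = q"
  using card_K_le card_K_ge by simp

section \<open>The quadric\<close>

definition F :: "'a \<Rightarrow> 'a" where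
  "F x = frob 2 x - frob 1 x + x"

definition W :: "'a set" where
  "W = range F"

lemma F_add: "F (x + y) = F x + F y"
  by (simp add: F_def frob_hom)

lemma F_scale: "c \<in> K \<Longrightarrow> F (c * x) = c * F x"
  by (simp add: F_def frob_hom frob_K algebra_simps)

lemma W_subspace: "is_subspace K W"
  unfolding is_subspace_def W_def
  by (auto simp: F_add[symmetric] F_scale[symmetric] intro!: range_eqI[of _ _ 0]) (simp add: F_def)

lemma frob_4_W: "z \<in> W \<Longrightarrow> frob 4 z = z + frob 1 z - frob 3 z"
  by (auto simp: W_def F_def frob_hom)

lemma frob_5_W: "z \<in> W \<Longrightarrow> frob 5 z = frob 2 z + frob 3 z - z"
  by (auto simp: W_def F_def frob_hom)

lemma card_W_le: "card W \<le> q ^ 4"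
proof (rule card_roots_of_monic_le)
  let ?r = "monom 1 (q ^ 3) - monom 1 q - monom (1 :: 'a) 1"
  have "degree ?r \<le> q ^ 3"
    using q_power_strict_mono[of 1 3] q_power_strict_mono[of 0 3]
    by (intro degree_diff_le order_trans[OF degree_monom_le]) simp_all
  then show "degree ?r < q ^ 4"
    using q_power_strict_mono[of 3 4] by linarith
  show "z ^ q ^ 4 + poly ?r z = 0" if "z \<in> W" for z
    using frob_4_W[OF that] by (simp add: frob_def poly_monom algebra_simps)
qed

lemma card_F_kernel: "card {x. F x = 0} \<le> q ^ 2"
proof (rule card_roots_of_monic_le)
  have "degree (monom 1 1 - monom (1 :: 'a) q) \<le> q"
    using q_gt_1 by (intro degree_diff_le order_trans[OF degree_monom_le]) simp_all
  then show "degree (monom 1 1 - monom (1 :: 'a) q) < q ^ 2"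
    using q_power_strict_mono[of 1 2] by simp
  show "x ^ q ^ 2 + poly (monom 1 1 - monom 1 q) x = 0" if "x \<in> {x. F x = 0}" for x
    using that by (simp add: F_def frob_def poly_monom algebra_simps)
qed

lemma card_W: "card W = q ^ 4"
proof -
  have "q ^ 4 * q ^ 2 = q ^ 6"
    by (simp flip: power_add)
  also have "\<dots> \<le> card W * card {x. F x = 0}"
    using card_UNIV_le_card_range_mult_card_kernel[of F] card_field by (simp add: W_def F_add)
  also have "\<dots> \<le> card W * q ^ 2"
    using card_F_kernel by (rule mult_le_mono2)
  finally have "q ^ 4 \<le> card W"
    using q_gt_1 by (subst (asm) mult_le_cancel2) simp
  with card_W_le show ?thesis
    by simp
qed

lemma dim4_subspace_W: "dim4_subspace K W"
  using dim4_subspace_if_card[OF _ W_subspace] card_W card_K by simp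

definition Phi :: "'a \<Rightarrow> 'a" where
  "Phi z = frob 2 z * z + frob 2 z * frob 1 z + frob 1 z * frob 3 z"

lemma polar_Phi:
  "polar Phi u v = u * frob 2 v + frob 2 u * v + frob 1 u * frob 2 v + frob 2 u * frob 1 v
     + frob 1 u * frob 3 v + frob 3 u * frob 1 v"
  unfolding polar_def Phi_def by (simp add: frob_hom algebra_simps)

lemma Phi_mem_K: "z \<in> W \<Longrightarrow> Phi z \<in> K"
  unfolding mem_K_iff Phi_def by (simp add: frob_hom frob_4_W algebra_simps)

lemma Phi_scale: "c \<in> K \<Longrightarrow> Phi (c * z) = c\<^sup>2 * Phi z"
  unfolding Phi_def by (simp add: frob_hom frob_K power2_eq_square algebra_simps)

lemma polar_Phi_add: "polar Phi (u + u') v = polar Phi u v + polar Phi u' v"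
  unfolding polar_Phi by (simp add: frob_hom algebra_simps)

lemma polar_Phi_scale: "c \<in> K \<Longrightarrow> polar Phi (c * u) v = c * polar Phi u v"
  unfolding polar_Phi by (simp add: frob_hom frob_K algebra_simps)

lemma quadratic_form_Phi: "quadratic_form_on K W Phi"
  unfolding quadratic_form_on_def
  using Phi_mem_K Phi_scale polar_Phi_add polar_Phi_scale by simp

lemma polar_Phi_F: "v \<in> W \<Longrightarrow> polar Phi v (F x) = trace (frob 2 v * x)"
  unfolding polar_Phi F_def trace_def by (simp add: frob_hom frob_4_W frob_5_W algebra_simps)

lemma nonsingular_Phi: "nonsingular_qf W Phi"
  unfolding nonsingular_qf_def
proof (intro ballI impI)
  fix v
  assume "v \<in> W" and v: "v \<noteq> 0 \<and> Phi v = 0 \<and> (\<forall>w\<in>W. polar Phi v w = 0)"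
  obtain y where "trace y \<noteq> 0"
    using trace_nonzero by blast
  moreover have "polar Phi v (F (y / frob 2 v)) = trace y"
    using \<open>v \<in> W\<close> v by (simp add: polar_Phi_F)
  moreover have "F (y / frob 2 v) \<in> W"
    by (simp add: W_def)
  ultimately show False
    using v by simp
qed

lemma Phi_key_identity:
  "(frob 2 u * frob 1 v - frob 1 u * frob 2 v) * (u * frob 1 v - frob 1 u * v)
     = (frob 1 v)\<^sup>2 * Phi u - frob 1 u * frob 1 v * polar Phi u v + (frob 1 u)\<^sup>2 * Phi v"
  unfolding polar_Phi Phi_def by (simp add: power2_eq_square algebra_simps)

lemma singular_pair_proportional:
  assumes "Phi u = 0" "Phi v = 0" "polar Phi u v = 0"
  shows "u * frob 1 v = frob 1 u * v"
proof -
  define m where "m = u * frob 1 v - frob 1 u * v"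
  have "frob 2 u * frob 1 v - frob 1 u * frob 2 v = - frob 1 m"
    by (simp add: m_def frob_hom)
  then have "- frob 1 m * m = 0"
    using Phi_key_identity[of u v] assms by (simp add: m_def)
  then show ?thesis
    by (simp add: m_def)
qed

lemma no_line_Phi: "contains_no_line K W Phi"
  unfolding contains_no_line_def
proof (intro ballI impI notI)
  fix u v
  assume indep: "\<forall>a\<in>K. \<forall>b\<in>K. a * u + b * v = 0 \<longrightarrow> a = 0 \<and> b = 0"
    and singular: "\<forall>a\<in>K. \<forall>b\<in>K. Phi (a * u + b * v) = 0"
  have "Phi u = 0" "Phi v = 0" "Phi (u + v) = 0"
    using singular[rule_format, of 1 0] singular[rule_format, of 0 1] singular[rule_format, of 1 1]
    by simp_all
  then have proportional: "u * frob 1 v = frob 1 u * v"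
    by (intro singular_pair_proportional) (simp_all add: polar_def)
  have "u \<noteq> 0"
    using indep[rule_format, of 1 0] by auto
  then have "v / u \<in> K"
    using proportional by (simp add: mem_K_iff frob_divide field_simps)
  moreover have "v / u * u + (- 1) * v = 0"
    using \<open>u \<noteq> 0\<close> by simp
  ultimately show False
    using indep[rule_format, of "v / u" "- 1"] diff_mem[OF zero_mem one_mem] by simp
qed

lemma elliptic_quadric_W: "elliptic_quadric K W Phi"
  unfolding elliptic_quadric_def
  using dim4_subspace_W quadratic_form_Phi nonsingular_Phi no_line_Phi by blast

end

theorem mainTheorem16:
  fixes q :: nat
  assumes "\<exists>p k. prime p \<and> k > 0 \<and> q = p ^ k"
    and "card (UNIV :: 'a set) = q ^ 6"
  shows "elliptic_quadric (subfield_q q :: ('a::{finite,field}) set)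
           ((\<lambda>x::'a. x ^ (q^2) - x ^ q + x) ` UNIV)
           (\<lambda>z. z ^ (q^2) * z + z ^ (q^2) * z ^ q + z ^ q * z ^ (q^3))"
proof -
  interpret sextic_extension q "TYPE('a)"
    using assms by unfold_locales
  have "(\<lambda>x::'a. x ^ (q^2) - x ^ q + x) ` UNIV = W"
    by (simp add: W_def F_def frob_def)
  moreover have "(\<lambda>z::'a. z ^ (q^2) * z + z ^ (q^2) * z ^ q + z ^ q * z ^ (q^3)) = Phi"
    by (simp add: fun_eq_iff Phi_def frob_def)
  ultimately show ?thesis
    using elliptic_quadric_W by simp
qed

end
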